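(* Let $\mathcal{L}$ be the Laplace operator on the real Euclidean space of $d\times d$ Hermitian matrices $M=(z_{ij})$ endowed with the inner product $\langle A,B\rangle=\mathrm{trace}(AB)$ (the generator of a Brownian Hermitian matrix), with carré du champ $\Gamma$ (extended complex-bilinearly to complex-valued functions), so that $\mathcal{L}(z_{ij})=0$. Let $P(X)=\det(X\,\mathrm{Id}-M)$. Then $$\Gamma\big(P(X),P(Y)\big)=\frac{1}{Y-X}\big(P'(X)P(Y)-P'(Y)P(X)\big),\qquad \mathcal{L}\big(P(X)\big)=-P''(X).$$
   Context: The carré du champ of a diffusion operator $\mathcal{L}$ is $\Gamma(f,g)=\frac12\big(\mathcal{L}(fg)-f\mathcal{L}g-g\mathcal{L}f\big)$. For this Laplacian one has $\Gamma(z_{ij},z_{kl})=\delta_{il}\delta_{jk}$ and $\Gamma(z_{ij},\bar z_{kl})=\delta_{ik}\delta_{jl}$. Derivatives $P'$, $P''$ are with respect to $X$. *)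

theory Defs
  imports "HOL-Analysis.Analysis"
begin

text \<open>Complex d x d matrices, with d = CARD('n). Hermitian matrices form the
real Euclidean space on which the Laplacian acts.\<close>

definition hermitian :: "complex^'n^'n \<Rightarrow> bool" where
  "hermitian M \<longleftrightarrow> (\<forall>i j. M $ i $ j = cnj (M $ j $ i))"

definition elem_mat :: "'n \<Rightarrow> 'n \<Rightarrow> complex^'n^'n" where
  "elem_mat i j = (\<chi> a b. if a = i \<and> b = j then 1 else 0)"

definition dir_d2 :: "(complex^'n^'n \<Rightarrow> complex) \<Rightarrow> complex^'n^'n \<Rightarrow> complex^'n^'n \<Rightarrow> complex" where
  "dir_d2 f M H =
     vector_derivative (\<lambda>t. vector_derivative (\<lambda>s. f (M + s *\<^sub>R H)) (at t)) (at 0)"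

text \<open>Laplacian on Hermitian matrices with inner product trace(AB), i.e. the sum of
second directional derivatives along the orthonormal basis
E_ii, (E_ij + E_ji)/sqrt 2, i(E_ij - E_ji)/sqrt 2 (i < j).  Each off-diagonal
pair {i,j} is counted once via the factor 1/2 over ordered pairs i \<noteq> j
(the directions for (j,i) coincide up to sign with those for (i,j)).\<close>
definition hlaplacian :: "(complex^'n^'n \<Rightarrow> complex) \<Rightarrow> complex^'n^'n \<Rightarrow> complex" where
  "hlaplacian f M =
     (\<Sum>i\<in>UNIV. dir_d2 f M (elem_mat i i))
     + (1/2) * (\<Sum>(i,j)\<in>{(i,j). i \<noteq> j}.
          dir_d2 f M ((1 / sqrt 2) *\<^sub>R (elem_mat i j + elem_mat j i))
        + dir_d2 f M ((1 / sqrt 2) *\<^sub>R (\<chi> a b. \<i> * (elem_mat i j - elem_mat j i) $ a $ b)))"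

definition carre_du_champ ::
  "(complex^'n^'n \<Rightarrow> complex) \<Rightarrow> (complex^'n^'n \<Rightarrow> complex) \<Rightarrow> complex^'n^'n \<Rightarrow> complex" where
  "carre_du_champ f g M =
     (1/2) * (hlaplacian (\<lambda>N. f N * g N) M - f M * hlaplacian g M - g M * hlaplacian f M)"

definition charpoly_fun :: "complex \<Rightarrow> complex^'n^'n \<Rightarrow> complex" where
  "charpoly_fun X M = det (mat X - M)"

end

theory Submission
  imports Defs
begin

text \<open>
  Along a line M + s H the characteristic polynomial is z \<mapsto> det (A + z D). Its first derivative
  is trace (adj A D) (Jacobi's formula) and its second derivative is a quadratic form in D.
  Summing a quadratic form over an orthonormal basis of the Hermitian matrices contracts
  H$a$b * H$c$d to [a = d \<and> b = c]. Applied to the second derivative of P(X), the contraction inserts a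
  transposition into every permutation of the Leibniz expansion, which flips its sign and
  leaves -P''(X). Applied to the product of first derivatives it leaves trace (adj A adj B)
  with A = X - M, B = Y - M; as B - A = (Y - X) Id, the identities A adj A = adj A A = det A Id
  give (Y - X) trace (adj A adj B) = det B trace (adj A) - det A trace (adj B), and
  trace (adj (X - M)) = P'(X).
\<close>

lemma has_field_derivative_prod_affine:
  fixes a b :: "'a \<Rightarrow> 'b::real_normed_field"
  shows "((\<lambda>z. \<Prod>i\<in>S. a i + z * b i) has_field_derivative
           (\<Sum>k\<in>S. b k * (\<Prod>i\<in>S - {k}. a i + z * b i))) (at z)"
  by (rule has_field_derivative_prod) (auto intro!: derivative_eq_intros)

lemma mat_matrix_mult_nth: "(mat c ** A) $ i $ j = c * A $ i $ j"
  by (simp add: matrix_matrix_mult_def mat_def if_distrib if_distribR cong: if_cong)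

lemma matrix_mult_mat_commute: "A ** mat c = mat c ** (A :: 'a::comm_semiring_1^'n^'n)"
  by (simp add: vec_eq_iff matrix_matrix_mult_def mat_def if_distrib if_distribR mult.commute cong: if_cong)

lemma trace_mat_matrix_mult: "trace (mat c ** A) = c * trace A"
  by (simp add: trace_def mat_matrix_mult_nth sum_distrib_left)

lemma matrix_add_rdistrib: "(A + B) ** C = A ** C + B ** C"
  by (vector matrix_matrix_mult_def sum.distrib[symmetric] field_simps)

lemma matrix_mult_uminus_right: "A ** (- B) = - (A ** (B :: 'a::ring_1^'n^'m))"
  by (vector matrix_matrix_mult_def sum_negf)

lemma trace_uminus: "trace (- A) = - trace (A :: 'a::ring_1^'n^'n)"
  by (simp add: trace_def sum_negf)

definition cofactor :: "'a::comm_ring_1^'n^'n \<Rightarrow> 'n::finite \<Rightarrow> 'n \<Rightarrow> 'a" where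
  "cofactor A k l = (\<Sum>p | p permutes UNIV.
     if p k = l then of_int (sign p) * (\<Prod>i\<in>UNIV - {k}. A$i$p i) else 0)"

definition adjugate :: "'a::comm_ring_1^'n^'n \<Rightarrow> 'a^'n^'n" where
  "adjugate A = (\<chi> i j. cofactor A j i)"

lemma sum_mult_cofactor:
  fixes A :: "'a::comm_ring_1^'n::finite^'n"
  shows "(\<Sum>l\<in>UNIV. A$j$l * cofactor A k l) = (if j = k then det A else 0)"
proof -
  define A' where "A' = (\<chi> i. if i = k then A$j else A$i)"
  have "(\<Sum>l\<in>UNIV. A$j$l * cofactor A k l)
      = (\<Sum>p | p permutes UNIV. \<Sum>l\<in>UNIV.
           if p k = l then A$j$l * (of_int (sign p) * (\<Prod>i\<in>UNIV - {k}. A$i$p i)) else 0)"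
    unfolding cofactor_def sum_distrib_left by (subst sum.swap) (auto intro!: sum.cong)
  also have "\<dots> = (\<Sum>p | p permutes UNIV. of_int (sign p) * (A'$k$p k * (\<Prod>i\<in>UNIV - {k}. A'$i$p i)))"
    by (intro sum.cong) (auto simp: A'_def mult_ac)
  also have "\<dots> = det A'"
    unfolding det_def by (intro sum.cong refl) (simp add: prod.remove)
  also have "det A' = (if j = k then det A else 0)"
  proof (cases "j = k")
    case True
    then have "A' = A" by (simp add: A'_def vec_eq_iff)
    with True show ?thesis by simp
  next
    case False
    then have "row j A' = row k A'" by (simp add: A'_def row_def vec_eq_iff)
    with False show ?thesis by (simp add: det_identical_rows)
  qed
  finally show ?thesis .
qed

lemma matrix_mult_adjugate: "A ** adjugate A = mat (det A)"
  by (simp add: vec_eq_iff matrix_matrix_mult_def adjugate_def mat_def sum_mult_cofactor)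

lemma cofactor_transpose:
  fixes A :: "'a::comm_ring_1^'n::finite^'n"
  shows "cofactor (transpose A) k l = cofactor A l k"
proof -
  have "cofactor (transpose A) k l = (\<Sum>q | q permutes UNIV.
     if inv q k = l then of_int (sign (inv q)) * (\<Prod>i\<in>UNIV - {k}. A$(inv q i)$i) else 0)"
    unfolding cofactor_def transpose_def
    by (rule sum.reindex_bij_witness[of _ inv inv]) (auto simp: permutes_inv permutes_inv_inv)
  also have "\<dots> = cofactor A l k"
    unfolding cofactor_def
  proof (intro sum.cong refl)
    fix q :: "'n \<Rightarrow> 'n" assume "q \<in> {q. q permutes UNIV}"
    then have q: "q permutes UNIV" by simp
    show "(if inv q k = l then of_int (sign (inv q)) * (\<Prod>i\<in>UNIV - {k}. A$(inv q i)$i) else 0)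
      = (if q l = k then of_int (sign q) * (\<Prod>i\<in>UNIV - {l}. A$i$q i) else 0)"
    proof (cases "q l = k")
      case True
      have "(\<Prod>i\<in>UNIV - {k}. A$(inv q i)$i) = (\<Prod>i\<in>UNIV - {l}. A$i$q i)"
        by (rule prod.reindex_bij_witness[of _ q "inv q"])
           (use q True in \<open>auto simp: permutes_inverses permutes_inj[OF q, THEN inj_eq]\<close>)
      moreover have "inv q k = l"
        using q True by (metis permutes_inverses(2))
      ultimately show ?thesis
        using q True by (simp add: sign_inverse permutes_imp_permutation)
    qed (use q in \<open>auto simp: permutes_inverses\<close>)
  qed
  finally show ?thesis .
qed

lemma adjugate_transpose: "adjugate (transpose A) = transpose (adjugate A)"
  unfolding vec_eq_iff adjugate_def by (simp add: cofactor_transpose) (simp add: transpose_def)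

lemma adjugate_matrix_mult: "adjugate A ** A = mat (det A)"
  by (metis adjugate_transpose det_transpose matrix_mult_adjugate matrix_transpose_mul
      transpose_mat transpose_transpose)

lemma trace_adjugate_matrix_mult:
  fixes A D :: "'a::comm_ring_1^'n::finite^'n"
  shows "trace (adjugate A ** D) = (\<Sum>p | p permutes UNIV.
           of_int (sign p) * (\<Sum>k\<in>UNIV. D$k$p k * (\<Prod>i\<in>UNIV - {k}. A$i$p i)))"
proof -
  have "trace (adjugate A ** D) = (\<Sum>k\<in>UNIV. \<Sum>l\<in>UNIV. cofactor A k l * D$k$l)"
    unfolding trace_def matrix_matrix_mult_def adjugate_def
    by (simp add: mult.commute) (subst sum.swap, rule refl)
  also have "\<dots> = (\<Sum>k\<in>UNIV. \<Sum>p | p permutes UNIV. of_int (sign p) * (D$k$p k * (\<Prod>i\<in>UNIV - {k}. A$i$p i)))"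
    unfolding cofactor_def sum_distrib_right
    by (subst sum.swap) (simp add: if_distrib if_distribR mult_ac cong: if_cong)
  also have "\<dots> = (\<Sum>p | p permutes UNIV. of_int (sign p) * (\<Sum>k\<in>UNIV. D$k$p k * (\<Prod>i\<in>UNIV - {k}. A$i$p i)))"
    by (subst sum.swap) (simp add: sum_distrib_left)
  finally show ?thesis .
qed

definition det_deriv2 :: "'a::comm_ring_1^'n^'n \<Rightarrow> 'a^'n^'n \<Rightarrow> 'a" where
  "det_deriv2 A D = (\<Sum>p | p permutes UNIV. of_int (sign p) *
     (\<Sum>k\<in>UNIV. D$k$p k * (\<Sum>l\<in>UNIV - {k}. D$l$p l * (\<Prod>i\<in>UNIV - {k} - {l}. A$i$p i))))"

lemma det_deriv2_uminus: "det_deriv2 A (- D) = det_deriv2 A D"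
  by (simp add: det_deriv2_def sum_negf)

lemma has_field_derivative_det_line:
  fixes A D :: "'a::real_normed_field^'n::finite^'n"
  shows "((\<lambda>z. det (A + mat z ** D))
           has_field_derivative trace (adjugate (A + mat z ** D) ** D)) (at z)"
proof -
  have "((\<lambda>z. \<Sum>p | p permutes UNIV. of_int (sign p) * (\<Prod>i\<in>UNIV. A$i$p i + z * D$i$p i))
        has_field_derivative (\<Sum>p | p permutes UNIV. of_int (sign p) *
          (\<Sum>k\<in>UNIV. D$k$p k * (\<Prod>i\<in>UNIV - {k}. A$i$p i + z * D$i$p i)))) (at z)"
    by (intro DERIV_sum DERIV_cmult has_field_derivative_prod_affine)
  then show ?thesis
    by (simp add: det_def trace_adjugate_matrix_mult mat_matrix_mult_nth)
qed

lemma has_field_derivative_trace_adjugate_line: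
  fixes A D :: "'a::real_normed_field^'n::finite^'n"
  shows "((\<lambda>z. trace (adjugate (A + mat z ** D) ** D))
           has_field_derivative det_deriv2 (A + mat z ** D) D) (at z)"
proof -
  have "((\<lambda>z. \<Sum>p | p permutes UNIV. of_int (sign p) *
          (\<Sum>k\<in>UNIV. D$k$p k * (\<Prod>i\<in>UNIV - {k}. A$i$p i + z * D$i$p i)))
        has_field_derivative (\<Sum>p | p permutes UNIV. of_int (sign p) *
          (\<Sum>k\<in>UNIV. D$k$p k * (\<Sum>l\<in>UNIV - {k}. D$l$p l *
             (\<Prod>i\<in>UNIV - {k} - {l}. A$i$p i + z * D$i$p i))))) (at z)"
    by (intro DERIV_sum DERIV_cmult has_field_derivative_prod_affine)
  then show ?thesis
    by (simp add: det_deriv2_def trace_adjugate_matrix_mult mat_matrix_mult_nth)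
qed

lemma trace_adjugate_mult_adjugate_shift:
  fixes A :: "'a::comm_ring_1^'n::finite^'n" and c :: 'a
  defines "B \<equiv> A + mat c"
  shows "c * trace (adjugate A ** adjugate B) = det B * trace (adjugate A) - det A * trace (adjugate B)"
proof -
  have "adjugate A ** mat (det B) = adjugate A ** (B ** adjugate B)"
    by (simp add: matrix_mult_adjugate)
  also have "\<dots> = (adjugate A ** A + adjugate A ** mat c) ** adjugate B"
    by (simp add: B_def matrix_mul_assoc matrix_add_ldistrib)
  also have "\<dots> = mat (det A) ** adjugate B + mat c ** (adjugate A ** adjugate B)"
    by (simp add: matrix_add_rdistrib adjugate_matrix_mult matrix_mult_mat_commute[of "adjugate A"]
        matrix_mul_assoc)
  finally have "trace (mat (det B) ** adjugate A)
      = trace (mat (det A) ** adjugate B) + trace (mat c ** (adjugate A ** adjugate B))"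
    by (simp add: matrix_mult_mat_commute[of "adjugate A"] trace_add)
  then show ?thesis
    by (simp add: trace_mat_matrix_mult)
qed

definition onb_sum :: "(complex^'n^'n \<Rightarrow> complex) \<Rightarrow> complex" where
  "onb_sum \<phi> =
     (\<Sum>i\<in>UNIV. \<phi> (elem_mat i i))
     + (1/2) * (\<Sum>(i,j)\<in>{(i,j). i \<noteq> j}.
          \<phi> ((1 / sqrt 2) *\<^sub>R (elem_mat i j + elem_mat j i))
        + \<phi> ((1 / sqrt 2) *\<^sub>R (\<chi> a b. \<i> * (elem_mat i j - elem_mat j i) $ a $ b)))"

lemma hlaplacian_eq_onb_sum: "hlaplacian f M = onb_sum (dir_d2 f M)"
  unfolding hlaplacian_def onb_sum_def ..

lemma onb_sum_add: "onb_sum (\<lambda>H. \<phi> H + \<psi> H) = onb_sum \<phi> + onb_sum \<psi>"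
  unfolding onb_sum_def by (simp add: sum.distrib case_prod_beta algebra_simps)

lemma onb_sum_cmult: "onb_sum (\<lambda>H. c * \<phi> H) = c * onb_sum \<phi>"
  unfolding onb_sum_def by (simp add: sum_distrib_left case_prod_beta algebra_simps)

lemma onb_sum_sum: "onb_sum (\<lambda>H. \<Sum>x\<in>S. \<phi> x H) = (\<Sum>x\<in>S. onb_sum (\<phi> x))"
proof (induction S rule: infinite_finite_induct)
  case (infinite S)
  then show ?case using onb_sum_cmult[of 0] by simp
next
  case empty
  then show ?case using onb_sum_cmult[of 0] by simp
qed (simp add: onb_sum_add)

lemma onb_sum_nth_mult:
  fixes a b c d :: "'n::finite"
  shows "onb_sum (\<lambda>H. H$a$b * H$c$d) = (if a = d \<and> b = c then 1 else 0)"
proof -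
  define e :: "'n \<Rightarrow> 'n \<Rightarrow> 'n \<Rightarrow> 'n \<Rightarrow> complex"
    where "e a b i j = (if a = i \<and> b = j then 1 else 0)" for a b i j
  define s where "s = complex_of_real (1 / sqrt 2)"
  have scaleR_nth: "(r *\<^sub>R N) $ i $ j = complex_of_real r * N $ i $ j" for r N i j
    by (simp only: vector_scaleR_component) (simp add: scaleR_conv_of_real)
  have sym_nth: "((1 / sqrt 2) *\<^sub>R (elem_mat i j + elem_mat j i)) $ a $ b = s * (e a b i j + e a b j i)"
    for i j a b
    unfolding scaleR_nth s_def e_def by (simp add: elem_mat_def)
  have skew_nth: "((1 / sqrt 2) *\<^sub>R (\<chi> a b. \<i> * (elem_mat i j - elem_mat j i) $ a $ b)) $ a $ b
      = s * \<i> * (e a b i j - e a b j i)" for i j a b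
    unfolding scaleR_nth s_def e_def by (simp add: elem_mat_def)
  have "s * s = 1/2"
    by (simp add: s_def flip: of_real_mult)
  have pair: "s * (u + v) * (s * (u' + v')) + s * \<i> * (u - v) * (s * \<i> * (u' - v'))
      = u * v' + v * u'" for u v u' v' :: complex
  proof -
    have "s * (u + v) * (s * (u' + v')) + s * \<i> * (u - v) * (s * \<i> * (u' - v'))
       = (s * s) * ((u + v) * (u' + v') - (u - v) * (u' - v'))"
      by (simp add: algebra_simps)
    also have "\<dots> = u * v' + v * u'"
      by (simp add: \<open>s * s = 1/2\<close> algebra_simps)
    finally show ?thesis .
  qed
  define C :: complex where "C = (if a = d \<and> b = c then 1 else 0)"
  have diag: "e a b i i * e c d i i = (if i = a then if a = b then C else 0 else 0)" for i
    by (auto simp: e_def C_def)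
  have offdiag: "e a b i j * e c d j i = (if (i,j) = (a,b) then C else 0)" for i j
    by (auto simp: e_def C_def)
  have "onb_sum (\<lambda>H. H$a$b * H$c$d) = (\<Sum>i\<in>UNIV. e a b i i * e c d i i)
     + (1/2) * (\<Sum>(i,j)\<in>{(i,j). i \<noteq> j}. e a b i j * e c d j i + e a b j i * e c d i j)"
    unfolding onb_sum_def sym_nth skew_nth pair
    by (simp add: e_def elem_mat_def)
  also have "(\<Sum>i\<in>UNIV. e a b i i * e c d i i) = (if a = b then C else 0)"
    by (simp add: diag)
  also have "(\<Sum>(i,j)\<in>{(i,j). i \<noteq> j}. e a b i j * e c d j i + e a b j i * e c d i j)
      = (\<Sum>x\<in>{(i,j). i \<noteq> j}. (if x = (a,b) then C else 0) + (if x = (b,a) then C else 0))"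
    by (rule sum.cong[OF refl]) (auto simp: offdiag split: if_splits)
  also have "\<dots> = (if a \<noteq> b then 2 * C else 0)"
    by (simp add: sum.distrib)
  finally show ?thesis
    by (auto simp: C_def)
qed

lemma onb_sum_trace_mult:
  "onb_sum (\<lambda>H. trace (A ** H) * trace (B ** H)) = trace (A ** B)"
proof -
  have "trace (A ** H) * trace (B ** H)
      = (\<Sum>i\<in>UNIV. \<Sum>j\<in>UNIV. \<Sum>k\<in>UNIV. \<Sum>l\<in>UNIV. (A$i$k * B$j$l) * (H$k$i * H$l$j))" for H
    by (simp add: trace_def matrix_matrix_mult_def sum_product mult_ac)
  then have "onb_sum (\<lambda>H. trace (A ** H) * trace (B ** H))
      = (\<Sum>i\<in>UNIV. \<Sum>j\<in>UNIV. \<Sum>k\<in>UNIV. \<Sum>l\<in>UNIV. (A$i$k * B$j$l) * (if k = j \<and> i = l then 1 else 0))"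
    by (simp add: onb_sum_sum onb_sum_cmult onb_sum_nth_mult)
  also have "\<dots> = (\<Sum>i\<in>UNIV. \<Sum>j\<in>UNIV. A$i$j * B$j$i)"
  proof (intro sum.cong refl)
    fix i j
    have "(\<Sum>l\<in>UNIV. (A$i$k * B$j$l) * (if k = j \<and> i = l then 1 else 0))
        = (if k = j then A$i$k * B$j$i else 0)" for k
      by (cases "k = j") (simp_all add: if_distrib[of "\<lambda>x. _ * x"] cong: if_cong)
    then show "(\<Sum>k\<in>UNIV. \<Sum>l\<in>UNIV. (A$i$k * B$j$l) * (if k = j \<and> i = l then 1 else 0))
        = A$i$j * B$j$i"
      by simp
  qed
  also have "\<dots> = trace (A ** B)"
    by (simp add: trace_def matrix_matrix_mult_def)
  finally show ?thesis .
qed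

lemma sum_permutes_transpose_pair:
  fixes A :: "'a::comm_ring_1^'n::finite^'n"
  assumes "k \<noteq> l"
  shows "(\<Sum>p | p permutes UNIV.
            if p k = l \<and> p l = k then of_int (sign p) * (\<Prod>i\<in>UNIV - {k} - {l}. A$i$p i) else 0)
       = - (\<Sum>p | p permutes UNIV.
            if k = p k \<and> l = p l then of_int (sign p) * (\<Prod>i\<in>UNIV - {k} - {l}. A$i$p i) else 0)"
proof -
  let ?t = "Transposition.transpose k l"
  have t: "?t permutes UNIV"
    by (rule permutes_swap_id) auto
  have sign: "sign (q \<circ> ?t) = - sign q" if "q permutes UNIV" for q :: "'n \<Rightarrow> 'n"
    using that assms
    by (simp add: sign_compose permutes_imp_permutation permutation_swap_id sign_swap_id)
  have "(\<Sum>p | p permutes UNIV.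
            if p k = l \<and> p l = k then of_int (sign p) * (\<Prod>i\<in>UNIV - {k} - {l}. A$i$p i) else 0)
      = (\<Sum>q | q permutes UNIV.
            if q (?t k) = l \<and> q (?t l) = k
            then of_int (sign (q \<circ> ?t)) * (\<Prod>i\<in>UNIV - {k} - {l}. A$i$q (?t i)) else 0)"
    by (rule sum.reindex_bij_witness[of _ "\<lambda>q. q \<circ> ?t" "\<lambda>q. q \<circ> ?t"])
       (auto simp: o_assoc[symmetric] intro: permutes_compose[OF t])
  also have "\<dots> = (\<Sum>q | q permutes UNIV.
            - (if k = q k \<and> l = q l then of_int (sign q) * (\<Prod>i\<in>UNIV - {k} - {l}. A$i$q i) else 0))"
    by (intro sum.cong refl) (auto simp: sign intro!: prod.cong)
  finally show ?thesis
    by (simp add: sum_negf)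
qed

lemma onb_sum_det_deriv2:
  fixes A :: "complex^'n::finite^'n"
  shows "onb_sum (det_deriv2 A) = - det_deriv2 A (mat 1)"
proof -
  define W where "W p k l = of_int (sign p) * (\<Prod>i\<in>UNIV - {k} - {l}. A$i$p i)" for p k l
  define P :: "('n \<Rightarrow> 'n) set" where "P = {p. p permutes UNIV}"
  have "det_deriv2 A = (\<lambda>H. \<Sum>p\<in>P. \<Sum>k\<in>UNIV. \<Sum>l\<in>UNIV - {k}. W p k l * (H$k$p k * H$l$p l))"
    by (simp add: fun_eq_iff det_deriv2_def W_def P_def sum_distrib_left mult_ac)
  then have "onb_sum (det_deriv2 A)
      = (\<Sum>p\<in>P. \<Sum>k\<in>UNIV. \<Sum>l\<in>UNIV - {k}. W p k l * (if k = p l \<and> p k = l then 1 else 0))"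
    by (simp only: onb_sum_sum onb_sum_cmult onb_sum_nth_mult)
  also have "\<dots> = (\<Sum>k\<in>UNIV. \<Sum>l\<in>UNIV - {k}. \<Sum>p\<in>P. if p k = l \<and> p l = k then W p k l else 0)"
    by (subst sum.swap, subst sum.swap) (auto intro!: sum.cong)
  also have "\<dots> = (\<Sum>k\<in>UNIV. \<Sum>l\<in>UNIV - {k}. - (\<Sum>p\<in>P. if k = p k \<and> l = p l then W p k l else 0))"
    unfolding P_def W_def by (intro sum.cong refl sum_permutes_transpose_pair) auto
  also have "\<dots> = - det_deriv2 A (mat 1)"
    by (simp add: det_deriv2_def W_def P_def mat_def sum_negf sum_distrib_left if_distrib if_distribR
        cong: if_cong)
       (subst sum.swap, subst sum.swap, auto intro!: sum.cong)
  finally show ?thesis .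
qed

lemma dir_d2_eq_line:
  assumes "\<And>s. f (M + s *\<^sub>R H) = F (of_real s)"
    and "\<And>z. (F has_field_derivative F' z) (at z)"
    and "\<And>z. (F' has_field_derivative F'' z) (at z)"
  shows "dir_d2 f M H = F'' 0"
proof -
  have "vector_derivative (\<lambda>s. f (M + s *\<^sub>R H)) (at t) = F' (of_real t)" for t
    unfolding assms(1) by (intro vector_derivative_at has_vector_derivative_real_field assms(2))
  then have "dir_d2 f M H = vector_derivative (\<lambda>t. F' (of_real t)) (at 0)"
    unfolding dir_d2_def by simp
  also have "\<dots> = F'' (of_real 0)"
    by (intro vector_derivative_at has_vector_derivative_real_field assms(3))
  finally show ?thesis by simp
qed

lemma charpoly_fun_line:
  "charpoly_fun X (M + s *\<^sub>R H) = det ((mat X - M) + mat (of_real s) ** (- H))"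
proof -
  have "(s *\<^sub>R H) $ i $ j = of_real s * H $ i $ j" for i j
    by (simp only: vector_scaleR_component) (simp add: scaleR_conv_of_real)
  then show ?thesis
    unfolding charpoly_fun_def by (intro arg_cong[where f = det]) (simp add: vec_eq_iff mat_matrix_mult_nth)
qed

lemma charpoly_fun_eq_det_line: "charpoly_fun x M = det (- M + mat x ** mat 1)"
  by (simp add: charpoly_fun_def)

lemma deriv_charpoly_fun: "deriv (\<lambda>x. charpoly_fun x M) = (\<lambda>x. trace (adjugate (mat x - M)))"
proof
  fix x
  show "deriv (\<lambda>x. charpoly_fun x M) x = trace (adjugate (mat x - M))"
    using has_field_derivative_det_line[of "- M" "mat 1" x]
    by (intro DERIV_imp_deriv) (simp add: charpoly_fun_eq_det_line)
qed

lemma deriv2_charpoly_fun: "deriv (deriv (\<lambda>x. charpoly_fun x M)) x = det_deriv2 (mat x - M) (mat 1)"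
  using has_field_derivative_trace_adjugate_line[of "- M" "mat 1" x]
  unfolding deriv_charpoly_fun by (intro DERIV_imp_deriv) simp

lemma dir_d2_charpoly_fun: "dir_d2 (charpoly_fun X) M H = det_deriv2 (mat X - M) H"
  using dir_d2_eq_line[OF charpoly_fun_line has_field_derivative_det_line
      has_field_derivative_trace_adjugate_line]
  by (simp add: det_deriv2_uminus)

lemma dir_d2_charpoly_fun_mult:
  fixes M H :: "complex^'n::finite^'n" and X Y :: complex
  defines "A \<equiv> mat X - M" and "B \<equiv> mat Y - M"
  shows "dir_d2 (\<lambda>N. charpoly_fun X N * charpoly_fun Y N) M H =
    det B * det_deriv2 A H + 2 * (trace (adjugate A ** H) * trace (adjugate B ** H)) + det A * det_deriv2 B H"
proof -
  let ?a = "\<lambda>z. A + mat z ** (- H)" and ?b = "\<lambda>z. B + mat z ** (- H)"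
  have "dir_d2 (\<lambda>N. charpoly_fun X N * charpoly_fun Y N) M H =
    det_deriv2 (?a 0) (- H) * det (?b 0) + 2 * (trace (adjugate (?a 0) ** - H) * trace (adjugate (?b 0) ** - H))
    + det (?a 0) * det_deriv2 (?b 0) (- H)"
  proof (rule dir_d2_eq_line)
    show "charpoly_fun X (M + s *\<^sub>R H) * charpoly_fun Y (M + s *\<^sub>R H)
        = det (?a (of_real s)) * det (?b (of_real s))"
      for s by (simp add: charpoly_fun_line A_def B_def)
    show "((\<lambda>z. det (?a z) * det (?b z)) has_field_derivative
        trace (adjugate (?a z) ** - H) * det (?b z) + det (?a z) * trace (adjugate (?b z) ** - H)) (at z)" for z
      by (auto intro!: derivative_eq_intros has_field_derivative_det_line)
    show "((\<lambda>z. trace (adjugate (?a z) ** - H) * det (?b z) + det (?a z) * trace (adjugate (?b z) ** - H))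
        has_field_derivative det_deriv2 (?a z) (- H) * det (?b z)
          + 2 * (trace (adjugate (?a z) ** - H) * trace (adjugate (?b z) ** - H))
          + det (?a z) * det_deriv2 (?b z) (- H)) (at z)" for z
      by (auto intro!: derivative_eq_intros has_field_derivative_det_line
          has_field_derivative_trace_adjugate_line simp: algebra_simps)
  qed
  then show ?thesis
    by (simp add: det_deriv2_uminus matrix_mult_uminus_right trace_uminus mult.commute)
qed

text \<open>The Laplacian has constant coefficients, so both identities hold at every complex matrix.\<close>

theorem proposition5p5:
  fixes M :: "complex^'n^'n" and X Y :: complex
  assumes "hermitian M" and "X \<noteq> Y"
  shows "carre_du_champ (charpoly_fun X) (charpoly_fun Y) M =
           (deriv (\<lambda>x. charpoly_fun x M) X * charpoly_fun Y M
            - deriv (\<lambda>x. charpoly_fun x M) Y * charpoly_fun X M) / (Y - X)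
         \<and> hlaplacian (charpoly_fun X) M = - deriv (deriv (\<lambda>x. charpoly_fun x M)) X"
proof
  have "hlaplacian (charpoly_fun x) M = - det_deriv2 (mat x - M) (mat 1)" for x
    by (simp add: hlaplacian_eq_onb_sum dir_d2_charpoly_fun[abs_def] onb_sum_det_deriv2)
  then show "hlaplacian (charpoly_fun X) M = - deriv (deriv (\<lambda>x. charpoly_fun x M)) X"
    by (simp add: deriv2_charpoly_fun)
  define A B where "A = mat X - M" and "B = mat Y - M"
  have "hlaplacian (\<lambda>N. charpoly_fun X N * charpoly_fun Y N) M
      = det B * hlaplacian (charpoly_fun X) M + 2 * trace (adjugate A ** adjugate B)
        + det A * hlaplacian (charpoly_fun Y) M"
    by (simp add: hlaplacian_eq_onb_sum dir_d2_charpoly_fun_mult[abs_def] dir_d2_charpoly_fun[abs_def]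
        onb_sum_add onb_sum_cmult onb_sum_trace_mult A_def B_def)
  then have "carre_du_champ (charpoly_fun X) (charpoly_fun Y) M = trace (adjugate A ** adjugate B)"
    by (simp add: carre_du_champ_def charpoly_fun_def A_def B_def)
  also have "\<dots> = (det B * trace (adjugate A) - det A * trace (adjugate B)) / (Y - X)"
  proof -
    have "B = A + mat (Y - X)"
      by (simp add: A_def B_def vec_eq_iff mat_def)
    then show ?thesis
      using trace_adjugate_mult_adjugate_shift[of "Y - X" A] assms(2)
      by (simp add: field_simps)
  qed
  finally show "carre_du_champ (charpoly_fun X) (charpoly_fun Y) M =
           (deriv (\<lambda>x. charpoly_fun x M) X * charpoly_fun Y M
            - deriv (\<lambda>x. charpoly_fun x M) Y * charpoly_fun X M) / (Y - X)"
    unfolding deriv_charpoly_fun by (simp add: charpoly_fun_def A_def B_def mult.commute)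
qed

end
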